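(* Let $n\ge2$, $r\ge1$, and let $\mathbf Z_\vartriangle(n,r)\subseteq\mathrm{End}_{\mathbb Q(v)}(\boldsymbol\Omega^{\otimes r})$ be as in the context. Then the set $$\{\sigma_1^{\lambda_1}\cdots\sigma_{r-1}^{\lambda_{r-1}}\sigma_r^{\lambda_r}\mid \lambda_1,\dots,\lambda_{r-1}\in\mathbb N,\ \lambda_r\in\mathbb Z\}$$ is a $\mathbb Q(v)$-basis of $\mathbf Z_\vartriangle(n,r)$; in other words $\mathbf Z_\vartriangle(n,r)$ is a polynomial ring in $\sigma_1,\dots,\sigma_{r-1}$ over the Laurent polynomial ring $\mathbb Q(v)[\sigma_r,\sigma_r^{-1}]$.
   Context: $\boldsymbol\Omega$ is the $\mathbb Q(v)$-space with basis $\{\omega_s\}_{s\in\mathbb Z}$ and $\boldsymbol\Omega^{\otimes r}$ has basis $\omega_{\mathbf i}=\omega_{i_1}\otimes\cdots\otimes\omega_{i_r}$, $\mathbf i\in\mathbb Z^r$. For $1\le s\le r$ let $\phi_s$ be the invertible linear map $\omega_{\mathbf i}\mapsto\omega_{\mathbf i-n\mathbf e_s}$ (subtract $n$ from the $s$-th index); the $\phi_s$ commute. Let $\sigma_s$ ($1\le s\le r$) be the $s$-th elementary symmetric polynomial in $\phi_1,\dots,\phi_r$. Let $\mathfrak p_m=\sum_{s=1}^r\phi_s^m$ and $\mathfrak q_m=\sum_{s=1}^r\phi_s^{-m}$, and let $\mathbf Z_\vartriangle(n,r)$ be the $\mathbb Q(v)$-subalgebra generated by all $\mathfrak p_m,\mathfrak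 q_m$ ($m\ge1$); it coincides with the subalgebra generated by $\sigma_1,\dots,\sigma_r,\sigma_r^{-1}$. *)

theory Defs
  imports "HOL-Computational_Algebra.Polynomial" "HOL-Computational_Algebra.Fraction_Field"
begin

text \<open>The ground field Q(v): rational functions in one indeterminate v over the rationals.\<close>
type_synonym qv = "rat poly fract"

text \<open>Vectors of Omega^{tensor r} are coefficient functions on index tuples (lists of length r):
  the vector  sum_i f(i) omega_i  is represented by f.  Linear operators are functions on these.\<close>
type_synonym vec = "int list \<Rightarrow> qv"
type_synonym op = "vec \<Rightarrow> vec"

definition Omega :: "nat \<Rightarrow> vec set" where
  "Omega r = {f. finite {i. f i \<noteq> 0} \<and> (\<forall>i. f i \<noteq> 0 \<longrightarrow> length i = r)}"

text \<open>phi_s : omega_i |-> omega_(i - n e_s), s = 1..r (list position s-1); on coefficients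
  this is  (phi_s f)(j) = f(j + n e_s).  phi_inv s is its inverse.\<close>
definition phi :: "nat \<Rightarrow> nat \<Rightarrow> op" where
  "phi n s = (\<lambda>f j. f (j[s - 1 := j ! (s - 1) + int n]))"

definition phi_inv :: "nat \<Rightarrow> nat \<Rightarrow> op" where
  "phi_inv n s = (\<lambda>f j. f (j[s - 1 := j ! (s - 1) - int n]))"

definition op_add :: "op \<Rightarrow> op \<Rightarrow> op" where
  "op_add A B = (\<lambda>f j. A f j + B f j)"

definition op_smult :: "qv \<Rightarrow> op \<Rightarrow> op" where
  "op_smult c A = (\<lambda>f j. c * A f j)"

definition op_sum :: "('a \<Rightarrow> op) \<Rightarrow> 'a set \<Rightarrow> op" where
  "op_sum F A = (\<lambda>f j. \<Sum>a\<in>A. F a f j)"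

definition op_prod :: "(nat \<Rightarrow> op) \<Rightarrow> nat set \<Rightarrow> op" where
  "op_prod F S = foldr (\<circ>) (map F (sorted_list_of_set S)) id"

definition p_op :: "nat \<Rightarrow> nat \<Rightarrow> nat \<Rightarrow> op" where
  "p_op n r m = op_sum (\<lambda>s. phi n s ^^ m) {1..r}"

definition q_op :: "nat \<Rightarrow> nat \<Rightarrow> nat \<Rightarrow> op" where
  "q_op n r m = op_sum (\<lambda>s. phi_inv n s ^^ m) {1..r}"

inductive_set Zalg :: "nat \<Rightarrow> nat \<Rightarrow> op set" for n r where
  gen_p: "m \<ge> 1 \<Longrightarrow> p_op n r m \<in> Zalg n r"
| gen_q: "m \<ge> 1 \<Longrightarrow> q_op n r m \<in> Zalg n r"
| unit: "id \<in> Zalg n r"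
| add: "A \<in> Zalg n r \<Longrightarrow> B \<in> Zalg n r \<Longrightarrow> op_add A B \<in> Zalg n r"
| smult: "A \<in> Zalg n r \<Longrightarrow> op_smult c A \<in> Zalg n r"
| comp: "A \<in> Zalg n r \<Longrightarrow> B \<in> Zalg n r \<Longrightarrow> A \<circ> B \<in> Zalg n r"

definition sigma :: "nat \<Rightarrow> nat \<Rightarrow> nat \<Rightarrow> op" where
  "sigma n r k = op_sum (op_prod (phi n)) {S. S \<subseteq> {1..r} \<and> card S = k}"

definition sigma_r_inv :: "nat \<Rightarrow> nat \<Rightarrow> op" where
  "sigma_r_inv n r = op_prod (phi_inv n) {1..r}"

definition sigma_r_zpow :: "nat \<Rightarrow> nat \<Rightarrow> int \<Rightarrow> op" where
  "sigma_r_zpow n r k =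
     (if k \<ge> 0 then sigma n r r ^^ nat k else sigma_r_inv n r ^^ nat (- k))"

definition mon_idx :: "nat \<Rightarrow> ((nat \<Rightarrow> nat) \<times> int) set" where
  "mon_idx r = {(lam, k). \<forall>j. (j = 0 \<or> j \<ge> r) \<longrightarrow> lam j = 0}"

definition sigma_mon :: "nat \<Rightarrow> nat \<Rightarrow> (nat \<Rightarrow> nat) \<times> int \<Rightarrow> op" where
  "sigma_mon n r x = op_prod (\<lambda>s. sigma n r s ^^ fst x s) {1..<r} \<circ> sigma_r_zpow n r (snd x)"

end

theory Submission
  imports Defs "HOL-Library.Poly_Mapping"
begin

text \<open>Substituting phi_s for X_s sends a Laurent polynomial sum_a c_a X^a in X_1, ..., X_r to
  the operator f |-> (j |-> sum_a c_a f(j + n a)). This substitution is multiplicative, and it is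
  injective on polynomials in X_1, ..., X_r because n >= 1 makes the shifts j + n a pairwise
  distinct. It sends the power sums of the X_s and of the X_s^-1 to p_m and q_m, and the
  elementary symmetric polynomials e_k(X) to sigma_k. By the Newton identities (the ground field
  has characteristic 0) the power sums and the e_k generate the same subalgebra, and since
  e_k(X^-1) = e_r(X)^-1 e_(r-k)(X) this subalgebra is spanned by the monomials
  e_1^l_1 ... e_(r-1)^l_(r-1) e_r^l_r. These are linearly independent: the lexicographically
  leading exponent of such a monomial is sum_s l_s (1,...,1,0,...,0) (s ones, l_r counted on
  all r positions), and the l_s are its successive differences.\<close>

section \<open>Laurent polynomials acting by shifts\<close>

text \<open>The exponent of X_s is stored at position s; position 0 is unused, matching the
  1-based indexing of phi_s.\<close>
type_synonym exponent = "nat \<Rightarrow>\<^sub>0 int"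
type_synonym laurent = "exponent \<Rightarrow>\<^sub>0 qv"

abbreviation lookup where "lookup \<equiv> Poly_Mapping.lookup"
abbreviation single where "single \<equiv> Poly_Mapping.single"
abbreviation keys where "keys \<equiv> Poly_Mapping.keys"

definition shift_idx :: "nat \<Rightarrow> exponent \<Rightarrow> int list \<Rightarrow> int list" where
  "shift_idx n a j = map (\<lambda>i. j ! i + int n * lookup a (Suc i)) [0..<length j]"

lemma length_shift_idx [simp]: "length (shift_idx n a j) = length j"
  by (simp add: shift_idx_def)

lemma nth_shift_idx [simp]:
  "i < length j \<Longrightarrow> shift_idx n a j ! i = j ! i + int n * lookup a (Suc i)"
  by (simp add: shift_idx_def)

lemma shift_idx_0 [simp]: "shift_idx n 0 j = j"
  by (rule nth_equalityI) auto

lemma shift_idx_add: "shift_idx n (a + b) j = shift_idx n b (shift_idx n a j)"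
  by (rule nth_equalityI) (auto simp: lookup_add algebra_simps)

lemma shift_idx_uminus: "shift_idx n (- a) (shift_idx n a j) = j"
  by (metis add.right_inverse shift_idx_0 shift_idx_add)

definition eval_phi :: "nat \<Rightarrow> laurent \<Rightarrow> op" where
  "eval_phi n P = (\<lambda>f j. \<Sum>a\<in>keys P. lookup P a * f (shift_idx n a j))"

lemma eval_phi_superset:
  assumes "finite A" "keys P \<subseteq> A"
  shows "eval_phi n P f j = (\<Sum>a\<in>A. lookup P a * f (shift_idx n a j))"
  unfolding eval_phi_def
  by (rule sum.mono_neutral_left) (use assms in \<open>auto simp: in_keys_iff\<close>)

lemma eval_phi_add: "eval_phi n (P + Q) = op_add (eval_phi n P) (eval_phi n Q)"
proof (intro ext)
  fix f j
  have "eval_phi n (P + Q) f j = (\<Sum>a\<in>keys P \<union> keys Q. lookup (P + Q) a * f (shift_idx n a j))"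
    by (rule eval_phi_superset) (auto simp: keys_add)
  also have "\<dots> = (\<Sum>a\<in>keys P \<union> keys Q. lookup P a * f (shift_idx n a j))
                 + (\<Sum>a\<in>keys P \<union> keys Q. lookup Q a * f (shift_idx n a j))"
    by (simp add: lookup_add algebra_simps sum.distrib)
  also have "\<dots> = op_add (eval_phi n P) (eval_phi n Q) f j"
    unfolding op_add_def by (subst (1 2) eval_phi_superset[symmetric]) auto
  finally show "eval_phi n (P + Q) f j = op_add (eval_phi n P) (eval_phi n Q) f j" .
qed

lemma eval_phi_0: "eval_phi n 0 f j = 0"
  by (simp add: eval_phi_def)

lemma eval_phi_sum: "eval_phi n (sum g A) f j = (\<Sum>a\<in>A. eval_phi n (g a) f j)"
  by (induction A rule: infinite_finite_induct) (simp_all add: eval_phi_0 eval_phi_add op_add_def)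

lemma eval_phi_single: "eval_phi n (single a c) f j = c * f (shift_idx n a j)"
  by (simp add: eval_phi_def)

lemma poly_mapping_expand: "P = (\<Sum>a\<in>keys P. single a (lookup P a))"
proof (rule poly_mapping_eqI)
  fix k
  have "lookup (\<Sum>a\<in>keys P. single a (lookup P a)) k = (\<Sum>a\<in>keys P. if a = k then lookup P a else 0)"
    by (simp add: lookup_sum lookup_single when_def)
  also have "\<dots> = lookup P k" by (simp add: in_keys_iff)
  finally show "lookup P k = lookup (\<Sum>a\<in>keys P. single a (lookup P a)) k" by simp
qed

lemma poly_mapping_mult_expand:
  "P * Q = (\<Sum>a\<in>keys P. \<Sum>b\<in>keys Q. single (a + b) (lookup P a * lookup Q b))"
proof -
  have "P * Q = (\<Sum>a\<in>keys P. single a (lookup P a)) * (\<Sum>b\<in>keys Q. single b (lookup Q b))"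
    by (rule arg_cong2[where f="(*)"]) (rule poly_mapping_expand)+
  then show ?thesis
    by (simp add: sum_distrib_left sum_distrib_right mult_single, subst sum.swap, simp)
qed

lemma lookup_mult_expand:
  "lookup (P * Q) k = (\<Sum>a\<in>keys P. \<Sum>b\<in>keys Q. if a + b = k then lookup P a * lookup Q b else 0)"
  by (subst poly_mapping_mult_expand) (simp add: lookup_sum lookup_single when_def)

lemma lookup_smult: "lookup (single 0 c * P) k = c * lookup P k"
proof (cases "c = 0")
  case False
  then have "lookup (single 0 c * P) k = (\<Sum>b\<in>keys P. if b = k then c * lookup P b else 0)"
    by (simp add: lookup_mult_expand)
  also have "\<dots> = c * lookup P k" by (simp add: in_keys_iff)
  finally show ?thesis .
qed simp

lemma eval_phi_mult: "eval_phi n (P * Q) = eval_phi n P \<circ> eval_phi n Q"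
proof (intro ext)
  fix f j
  have "eval_phi n (P * Q) f j
      = (\<Sum>a\<in>keys P. \<Sum>b\<in>keys Q. lookup P a * lookup Q b * f (shift_idx n b (shift_idx n a j)))"
    by (subst poly_mapping_mult_expand) (simp add: eval_phi_sum eval_phi_single shift_idx_add)
  also have "\<dots> = (eval_phi n P \<circ> eval_phi n Q) f j"
    by (simp add: eval_phi_def sum_distrib_left mult.assoc)
  finally show "eval_phi n (P * Q) f j = (eval_phi n P \<circ> eval_phi n Q) f j" .
qed

lemma eval_phi_one: "eval_phi n 1 = id"
  by (auto simp: fun_eq_iff simp flip: single_one intro: trans[OF eval_phi_single])

lemma eval_phi_smult: "eval_phi n (single 0 c * P) = op_smult c (eval_phi n P)"
  by (auto simp: fun_eq_iff eval_phi_mult eval_phi_single op_smult_def)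

lemma eval_phi_power: "eval_phi n (P ^ m) = eval_phi n P ^^ m"
  by (induction m) (auto simp: eval_phi_one eval_phi_mult)

lemma eval_phi_prod: "eval_phi n (prod g S) = op_prod (\<lambda>s. eval_phi n (g s)) S"
proof -
  have "prod g S = prod_list (map g (sorted_list_of_set S))"
    by (cases "finite S") (auto simp: prod.distinct_set_conv_list[symmetric])
  moreover have "eval_phi n (prod_list (map g xs)) = foldr (\<circ>) (map (\<lambda>s. eval_phi n (g s)) xs) id"
    for xs by (induction xs) (auto simp: eval_phi_one eval_phi_mult)
  ultimately show ?thesis by (simp add: op_prod_def)
qed

lemma op_prod_cong: "(\<And>s. s \<in> S \<Longrightarrow> F s = G s) \<Longrightarrow> op_prod F S = op_prod G S"
  unfolding op_prod_def
  by (cases "finite S") (auto intro!: arg_cong[where f="\<lambda>xs. foldr (\<circ>) xs id"])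

lemma eval_phi_Omega:
  assumes "f \<in> Omega r"
  shows "eval_phi n P f \<in> Omega r"
proof -
  have supp: "\<exists>a\<in>keys P. f (shift_idx n a j) \<noteq> 0" if "eval_phi n P f j \<noteq> 0" for j
    using that unfolding eval_phi_def
    by (metis (no_types, lifting) mult_zero_right sum.not_neutral_contains_not_neutral)
  have "{j. eval_phi n P f j \<noteq> 0} \<subseteq> (\<Union>a\<in>keys P. shift_idx n (- a) ` {l. f l \<noteq> 0})"
    by (force dest: supp simp: shift_idx_uminus)
  moreover have "finite (\<Union>a\<in>keys P. shift_idx n (- a) ` {l. f l \<noteq> 0})"
    using assms by (simp add: Omega_def)
  moreover have "length j = r" if "eval_phi n P f j \<noteq> 0" for j
    using supp[OF that] assms by (auto simp: Omega_def)
  ultimately show ?thesis unfolding Omega_def by (auto intro: finite_subset)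
qed

section \<open>Newton identities\<close>

definition esym :: "(nat \<Rightarrow> 'a::comm_ring_1) \<Rightarrow> nat \<Rightarrow> nat \<Rightarrow> 'a" where
  "esym x r k = (\<Sum>S\<in>{S. S \<subseteq> {1..r} \<and> card S = k}. prod x S)"

definition psum :: "(nat \<Rightarrow> 'a::comm_ring_1) \<Rightarrow> nat \<Rightarrow> nat \<Rightarrow> 'a" where
  "psum x r i = (\<Sum>s\<in>{1..r}. x s ^ i)"

lemma esym_0 [simp]: "esym x r 0 = 1"
proof -
  have "{S. S \<subseteq> {1..r} \<and> card S = 0} = {{}}"
    by (auto dest: finite_subset)
  then show ?thesis unfolding esym_def by simp
qed

lemma esym_gt:
  assumes "k > r"
  shows "esym x r k = 0"
proof -
  have "card S \<noteq> k" if "S \<subseteq> {1..r}" for S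
    using card_mono[OF _ that] assms by simp
  then have "{S. S \<subseteq> {1..r} \<and> card S = k} = {}"
    by blast
  then show ?thesis unfolding esym_def by (metis sum.empty)
qed

lemma esym_top: "esym x r r = prod x {1..r}"
proof -
  have "{S. S \<subseteq> {1..r} \<and> card S = r} = {{1..r}}"
    using card_subset_eq[of "{1..r}"] by auto
  then show ?thesis unfolding esym_def by simp
qed

lemma esym_Suc_Suc: "esym x (Suc r) (Suc k) = esym x r (Suc k) + x (Suc r) * esym x r k"
proof -
  let ?A = "{S. S \<subseteq> {1..r} \<and> card S = Suc k}"
  let ?C = "{S. S \<subseteq> {1..r} \<and> card S = k}"
  let ?B = "insert (Suc r) ` ?C"
  have fin: "finite {S. S \<subseteq> {1..n::nat} \<and> card S = m}" for n m
    by (rule finite_subset[of _ "Pow {1..n}"]) auto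
  have eq: "{S. S \<subseteq> {1..Suc r} \<and> card S = Suc k} = ?A \<union> ?B"
  proof (intro equalityI subsetI)
    fix S assume S: "S \<in> {S. S \<subseteq> {1..Suc r} \<and> card S = Suc k}"
    show "S \<in> ?A \<union> ?B"
    proof (cases "Suc r \<in> S")
      case True
      then have "S = insert (Suc r) (S - {Suc r})" by auto
      moreover have "S - {Suc r} \<in> ?C" using S True
        by (auto simp: card_Diff_singleton dest: finite_subset)
      ultimately show ?thesis by blast
    next
      case False
      then show ?thesis using S by (auto simp: le_Suc_eq)
    qed
  next
    fix S assume "S \<in> ?A \<union> ?B"
    then show "S \<in> {S. S \<subseteq> {1..Suc r} \<and> card S = Suc k}"
    proof
      assume "S \<in> ?B"
      then obtain T where T: "T \<subseteq> {1..r}" "card T = k" "S = insert (Suc r) T" by auto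
      moreover have "finite T" "Suc r \<notin> T" using T(1) finite_subset by auto
      ultimately show ?thesis by auto
    qed auto
  qed
  have inj: "inj_on (insert (Suc r)) ?C"
    by (rule inj_onI) (metis Diff_insert_absorb atLeastAtMost_iff mem_Collect_eq not_less_eq_eq
        subsetD order_refl)
  have "esym x (Suc r) (Suc k) = sum (prod x) ?A + sum (prod x) ?B"
    unfolding esym_def eq by (rule sum.union_disjoint) (use fin in auto)
  also have "sum (prod x) ?B = sum (\<lambda>T. x (Suc r) * prod x T) ?C"
    unfolding sum.reindex[OF inj]
  proof (rule sum.cong)
    fix T assume "T \<in> ?C"
    then have "finite T" "Suc r \<notin> T" using finite_subset by auto
    then show "(prod x \<circ> insert (Suc r)) T = x (Suc r) * prod x T" by simp
  qed simp
  finally show ?thesis by (simp add: esym_def sum_distrib_left)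
qed

lemma esym_Suc:
  "esym x (Suc r) j = esym x r j + (if j = 0 then 0 else x (Suc r) * esym x r (j - 1))"
  by (cases j) (auto simp: esym_Suc_Suc)

lemma psum_Suc: "psum x (Suc r) i = psum x r i + x (Suc r) ^ i"
  by (simp add: psum_def)

lemma esym_power_alternating_sum:
  "(\<Sum>i\<le>m. (-1)^i * esym x (Suc r) (m - i) * x (Suc r) ^ Suc i) = x (Suc r) * esym x r m"
proof (induction m)
  case (Suc m)
  let ?y = "x (Suc r)"
  have "(\<Sum>i\<le>Suc m. (-1)^i * esym x (Suc r) (Suc m - i) * ?y ^ Suc i)
      = esym x (Suc r) (Suc m) * ?y
        + (\<Sum>i\<le>m. (-1)^Suc i * esym x (Suc r) (m - i) * ?y ^ Suc (Suc i))"
    by (subst sum.atMost_Suc_shift) simp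
  also have "(\<Sum>i\<le>m. (-1)^Suc i * esym x (Suc r) (m - i) * ?y ^ Suc (Suc i))
      = - ?y * (\<Sum>i\<le>m. (-1)^i * esym x (Suc r) (m - i) * ?y ^ Suc i)"
    by (simp add: sum_distrib_left algebra_simps)
  also have "\<dots> = - ?y * (?y * esym x r m)" using Suc by simp
  finally show ?case by (simp add: esym_Suc_Suc algebra_simps)
qed simp

lemma newton_identity:
  "of_nat (Suc m) * esym x r (Suc m) = (\<Sum>i\<le>m. (-1)^i * esym x r (m - i) * psum x r (Suc i))"
proof (induction r arbitrary: m)
  case 0
  then show ?case by (simp add: esym_gt psum_def)
next
  case (Suc r)
  let ?y = "x (Suc r)" and ?e = "esym x r" and ?p = "psum x r"
  have split: "(\<Sum>i\<le>m. (-1)^i * esym x (Suc r) (m - i) * psum x (Suc r) (Suc i))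
     = (\<Sum>i\<le>m. (-1)^i * ?e (m - i) * ?p (Suc i))
     + (\<Sum>i\<le>m. (-1)^i * (if m - i = 0 then 0 else ?y * ?e (m - i - 1)) * ?p (Suc i))
     + (\<Sum>i\<le>m. (-1)^i * esym x (Suc r) (m - i) * ?y ^ Suc i)"
    by (simp add: esym_Suc psum_Suc algebra_simps sum.distrib)
  have middle: "(\<Sum>i\<le>m. (-1)^i * (if m - i = 0 then 0 else ?y * ?e (m - i - 1)) * ?p (Suc i))
      = ?y * of_nat m * ?e m"
  proof (cases m)
    case (Suc m')
    have "(\<Sum>i\<le>m. (-1)^i * (if m - i = 0 then 0 else ?y * ?e (m - i - 1)) * ?p (Suc i))
        = ?y * (\<Sum>i\<le>m'. (-1)^i * ?e (m' - i) * ?p (Suc i))"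
      unfolding Suc by (subst sum.atMost_Suc)
        (auto intro!: sum.cong simp: Suc_diff_le sum_distrib_left algebra_simps)
    also have "\<dots> = ?y * of_nat m * ?e m"
      by (subst Suc.IH[of m', symmetric]) (simp add: Suc mult.assoc)
    finally show ?thesis .
  qed simp
  show ?case
    unfolding split middle esym_power_alternating_sum Suc.IH[symmetric]
    by (simp add: esym_Suc_Suc algebra_simps)
qed

locale laurent_subalgebra =
  fixes S :: "laurent set"
  assumes one_mem: "1 \<in> S"
    and add_mem: "P \<in> S \<Longrightarrow> Q \<in> S \<Longrightarrow> P + Q \<in> S"
    and mult_mem: "P \<in> S \<Longrightarrow> Q \<in> S \<Longrightarrow> P * Q \<in> S"
    and smult_mem: "P \<in> S \<Longrightarrow> single 0 c * P \<in> S"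
begin

lemma zero_mem: "0 \<in> S"
  using smult_mem[OF one_mem, of 0] by simp

lemma uminus_mem: "P \<in> S \<Longrightarrow> - P \<in> S"
  using smult_mem[of P "-1"] by (simp add: single_uminus)

lemma diff_mem: "P \<in> S \<Longrightarrow> Q \<in> S \<Longrightarrow> P - Q \<in> S"
  using add_mem uminus_mem by (metis diff_conv_add_uminus)

lemma sum_mem: "(\<And>a. a \<in> A \<Longrightarrow> g a \<in> S) \<Longrightarrow> sum g A \<in> S"
  by (induction A rule: infinite_finite_induct) (auto intro: zero_mem add_mem)

lemma prod_mem: "(\<And>a. a \<in> A \<Longrightarrow> g a \<in> S) \<Longrightarrow> prod g A \<in> S"
  by (induction A rule: infinite_finite_induct) (auto intro: one_mem mult_mem)

lemma power_mem: "P \<in> S \<Longrightarrow> P ^ k \<in> S"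
  by (induction k) (auto intro: one_mem mult_mem)

lemma sign_mult_mem: "P \<in> S \<Longrightarrow> (-1) ^ i * P \<in> S"
  by (intro mult_mem power_mem uminus_mem one_mem)

lemma esym_mem_if_psum_mem:
  assumes "\<And>i. psum x r (Suc i) \<in> S"
  shows "esym x r k \<in> S"
proof (induction k rule: less_induct)
  case (less k)
  show ?case
  proof (cases k)
    case (Suc m)
    have inv: "single 0 (1 / of_nat (Suc m)) * of_nat (Suc m) = (1::laurent)"
      by (simp flip: single_of_nat add: mult_single del: of_nat_Suc)
    have "esym x r k = single 0 (1 / of_nat (Suc m)) * (of_nat (Suc m) * esym x r (Suc m))"
      by (simp only: Suc mult.assoc[symmetric] inv mult_1)
    also have "\<dots> = single 0 (1 / of_nat (Suc m))
                   * (\<Sum>i\<le>m. (-1)^i * esym x r (m - i) * psum x r (Suc i))"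
      by (simp only: newton_identity)
    finally show ?thesis
      using less Suc by (auto intro!: smult_mem sum_mem mult_mem sign_mult_mem assms
          simp: mult.assoc)
  qed (simp add: one_mem)
qed

lemma psum_mem_if_esym_mem:
  assumes "\<And>k. esym x r k \<in> S"
  shows "psum x r (Suc m) \<in> S"
proof (induction m rule: less_induct)
  case (less m)
  define T where "T = (\<Sum>i<m. (-1)^i * esym x r (m - i) * psum x r (Suc i))"
  have newton: "of_nat (Suc m) * esym x r (Suc m) = T + (-1)^m * psum x r (Suc m)"
    unfolding newton_identity T_def
    by (simp add: sum.atMost_Suc lessThan_Suc_atMost[symmetric])
  have "((-1)::laurent)^m * (-1)^m = 1" by (simp flip: power_mult_distrib)
  then have "psum x r (Suc m) = (-1)^m * (single 0 (of_nat (Suc m)) * esym x r (Suc m) - T)"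
    unfolding single_of_nat newton by (simp add: algebra_simps flip: mult.assoc)
  moreover have "T \<in> S" unfolding T_def
    using less by (auto intro!: sum_mem mult_mem sign_mult_mem assms simp: mult.assoc)
  ultimately show ?case by (metis sign_mult_mem diff_mem smult_mem assms)
qed

end

section \<open>The monomials in the elementary symmetric polynomials\<close>

definition var :: "nat \<Rightarrow> laurent" where
  "var s = single (single s 1) 1"

definition var_inv :: "nat \<Rightarrow> laurent" where
  "var_inv s = single (single s (-1)) 1"

definition indicator_exp :: "nat set \<Rightarrow> exponent" where
  "indicator_exp S = (\<Sum>s\<in>S. single s 1)"

definition diag_exp :: "nat \<Rightarrow> int \<Rightarrow> exponent" where
  "diag_exp r k = (\<Sum>s\<in>{1..r}. single s k)"

definition top_power :: "nat \<Rightarrow> int \<Rightarrow> laurent" where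
  "top_power r k = single (diag_exp r k) 1"

definition sigma_monomial :: "nat \<Rightarrow> (nat \<Rightarrow> nat) \<times> int \<Rightarrow> laurent" where
  "sigma_monomial r x = (\<Prod>s\<in>{1..<r}. esym var r s ^ fst x s) * top_power r (snd x)"

lemma prod_var: "prod var S = single (indicator_exp S) 1"
  unfolding indicator_exp_def var_def
  by (induction S rule: infinite_finite_induct) (auto simp: mult_single)

lemma var_mult_var_inv: "var s * var_inv s = 1"
  by (simp add: var_def var_inv_def mult_single single_uminus flip: single_add)

lemma top_power_add: "top_power r a * top_power r b = top_power r (a + b)"
  by (simp add: top_power_def diag_exp_def mult_single single_add sum.distrib)

lemma top_power_0 [simp]: "top_power r 0 = 1"
  by (simp add: top_power_def diag_exp_def)

lemma top_power_power: "top_power r k ^ m = top_power r (int m * k)"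
  by (induction m) (auto simp: top_power_add algebra_simps)

lemma esym_var_top: "esym var r r = top_power r 1"
  by (simp add: esym_top prod_var top_power_def diag_exp_def indicator_exp_def)

lemma esym_var_inv_top: "esym var_inv r r = top_power r (-1)"
proof -
  have "esym var_inv r r * top_power r 1 = 1"
    by (simp add: esym_top flip: esym_var_top prod.distrib) (simp add: mult.commute var_mult_var_inv)
  moreover have "esym var_inv r r = esym var_inv r r * (top_power r 1 * top_power r (-1))"
    by (simp add: top_power_add)
  ultimately show ?thesis
    by (simp only: mult.assoc[symmetric] mult_1_left)
qed

lemma prod_var_inv_complement:
  assumes "S \<subseteq> {1..r}"
  shows "prod var_inv S = top_power r (-1) * prod var ({1..r} - S)"
proof -
  have all: "prod var {1..r} = prod var S * prod var ({1..r} - S)"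
    using prod.subset_diff[OF assms, of var] by (simp add: mult.commute)
  have inv_all: "top_power r (-1) * prod var {1..r} = 1"
    using esym_var_top[of r] by (simp add: esym_top top_power_add)
  have inv_S: "prod var_inv S * prod var S = 1"
    by (simp add: prod.distrib[symmetric] var_mult_var_inv mult.commute)
  have "prod var_inv S = prod var_inv S * (top_power r (-1) * prod var {1..r})"
    using inv_all by simp
  also have "\<dots> = (prod var_inv S * prod var S) * (top_power r (-1) * prod var ({1..r} - S))"
    unfolding all by (simp add: ac_simps)
  also have "\<dots> = top_power r (-1) * prod var ({1..r} - S)"
    using inv_S by simp
  finally show ?thesis .
qed

lemma esym_var_inv:
  assumes "j \<le> r"
  shows "esym var_inv r j = top_power r (-1) * esym var r (r - j)"
proof -
  have "esym var_inv r j
      = top_power r (-1) * (\<Sum>S\<in>{S. S \<subseteq> {1..r} \<and> card S = j}. prod var ({1..r} - S))"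
    unfolding esym_def sum_distrib_left by (rule sum.cong) (auto simp: prod_var_inv_complement)
  also have "(\<Sum>S\<in>{S. S \<subseteq> {1..r} \<and> card S = j}. prod var ({1..r} - S))
           = (\<Sum>T\<in>{T. T \<subseteq> {1..r} \<and> card T = r - j}. prod var T)"
  proof (rule sum.reindex_bij_witness[where i="\<lambda>T. {1..r} - T" and j="\<lambda>S. {1..r} - S"])
    fix T assume T: "T \<in> {T. T \<subseteq> {1..r} \<and> card T = r - j}"
    then show "{1..r} - ({1..r} - T) = T" by auto
    show "{1..r} - T \<in> {S. S \<subseteq> {1..r} \<and> card S = j}"
      using T assms by (auto simp: card_Diff_subset finite_subset)
  qed (auto simp: card_Diff_subset finite_subset)
  finally show ?thesis by (simp add: esym_def)
qed

lemma shift_idx_single: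
  assumes "s \<ge> 1"
  shows "shift_idx n (single s k) j = j[s - 1 := j ! (s - 1) + int n * k]"
  by (rule nth_equalityI) (use assms in \<open>auto simp: lookup_single when_def nth_list_update\<close>)

lemma eval_phi_var: "s \<ge> 1 \<Longrightarrow> eval_phi n (var s) = phi n s"
  by (simp add: fun_eq_iff var_def phi_def eval_phi_single shift_idx_single)

lemma eval_phi_var_inv: "s \<ge> 1 \<Longrightarrow> eval_phi n (var_inv s) = phi_inv n s"
  by (simp add: fun_eq_iff var_inv_def phi_inv_def eval_phi_single shift_idx_single)

lemma eval_phi_esym: "eval_phi n (esym var r k) = sigma n r k"
proof -
  have "eval_phi n (prod var S) = op_prod (phi n) S" if "S \<subseteq> {1..r}" for S
    unfolding eval_phi_prod using that by (auto intro!: op_prod_cong simp: eval_phi_var)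
  then show ?thesis
    unfolding sigma_def esym_def op_sum_def by (auto simp: fun_eq_iff eval_phi_sum)
qed

lemma eval_phi_top_power: "eval_phi n (top_power r k) = sigma_r_zpow n r k"
proof (cases "k \<ge> 0")
  case True
  then have "top_power r k = esym var r r ^ nat k" by (simp add: esym_var_top top_power_power)
  then show ?thesis using True by (simp add: sigma_r_zpow_def eval_phi_power eval_phi_esym)
next
  case False
  then have "top_power r k = esym var_inv r r ^ nat (-k)"
    by (simp add: esym_var_inv_top top_power_power)
  moreover have "eval_phi n (esym var_inv r r) = sigma_r_inv n r"
    unfolding sigma_r_inv_def esym_top eval_phi_prod by (auto intro!: op_prod_cong simp: eval_phi_var_inv)
  ultimately show ?thesis using False by (simp add: sigma_r_zpow_def eval_phi_power)
qed

lemma eval_phi_sigma_monomial: "eval_phi n (sigma_monomial r x) = sigma_mon n r x"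
  unfolding sigma_mon_def sigma_monomial_def eval_phi_mult eval_phi_prod eval_phi_top_power
  by (auto intro!: op_prod_cong simp: eval_phi_power eval_phi_esym)

lemma eval_phi_psum_var: "eval_phi n (psum var r m) = p_op n r m"
  unfolding p_op_def psum_def op_sum_def
  by (auto simp: fun_eq_iff eval_phi_sum eval_phi_power eval_phi_var)

lemma eval_phi_psum_var_inv: "eval_phi n (psum var_inv r m) = q_op n r m"
  unfolding q_op_def psum_def op_sum_def
  by (auto simp: fun_eq_iff eval_phi_sum eval_phi_power eval_phi_var_inv)

inductive_set laurent_Z :: "nat \<Rightarrow> laurent set" for r where
  "m \<ge> 1 \<Longrightarrow> psum var r m \<in> laurent_Z r"
| "m \<ge> 1 \<Longrightarrow> psum var_inv r m \<in> laurent_Z r"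
| "1 \<in> laurent_Z r"
| "P \<in> laurent_Z r \<Longrightarrow> Q \<in> laurent_Z r \<Longrightarrow> P + Q \<in> laurent_Z r"
| "P \<in> laurent_Z r \<Longrightarrow> Q \<in> laurent_Z r \<Longrightarrow> P * Q \<in> laurent_Z r"
| "P \<in> laurent_Z r \<Longrightarrow> single 0 c * P \<in> laurent_Z r"

interpretation laurent_Z: laurent_subalgebra "laurent_Z r"
  by unfold_locales (auto intro: laurent_Z.intros)

lemma eval_phi_laurent_Z: "P \<in> laurent_Z r \<Longrightarrow> eval_phi n P \<in> Zalg n r"
proof (induction rule: laurent_Z.induct)
  case (1 m)
  then show ?case by (simp add: eval_phi_psum_var Zalg.gen_p)
next
  case (2 m)
  then show ?case by (simp add: eval_phi_psum_var_inv Zalg.gen_q)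
next
  case 3
  then show ?case by (simp only: eval_phi_one Zalg.unit)
next
  case (4 P Q)
  then show ?case by (simp only: eval_phi_add Zalg.add)
next
  case (5 P Q)
  then show ?case by (simp only: eval_phi_mult Zalg.comp)
next
  case (6 P c)
  then show ?case by (simp only: eval_phi_smult Zalg.smult)
qed

lemma sigma_monomial_laurent_Z: "sigma_monomial r x \<in> laurent_Z r"
proof -
  have esym_var: "esym var r k \<in> laurent_Z r" for k
    by (rule laurent_Z.esym_mem_if_psum_mem) (auto intro: laurent_Z.intros)
  have esym_var_inv: "esym var_inv r r \<in> laurent_Z r"
    by (rule laurent_Z.esym_mem_if_psum_mem) (auto intro: laurent_Z.intros)
  have "top_power r k \<in> laurent_Z r" for k
  proof (cases "k \<ge> 0")
    case True
    then have "top_power r k = esym var r r ^ nat k" by (simp add: top_power_power esym_var_top)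
    then show ?thesis using laurent_Z.power_mem[OF esym_var] by simp
  next
    case False
    then have "top_power r k = esym var_inv r r ^ nat (-k)"
      by (simp add: top_power_power esym_var_inv_top)
    then show ?thesis using laurent_Z.power_mem[OF esym_var_inv] by simp
  qed
  then show ?thesis unfolding sigma_monomial_def
    by (intro laurent_Z.mult_mem laurent_Z.prod_mem laurent_Z.power_mem esym_var)
qed

lemma sigma_mon_in_Zalg: "sigma_mon n r x \<in> Zalg n r"
  using eval_phi_laurent_Z[OF sigma_monomial_laurent_Z] by (simp add: eval_phi_sigma_monomial)

section \<open>Zalg is spanned by the monomials\<close>

inductive_set monomial_span :: "nat \<Rightarrow> laurent set" for r where
  monomial: "x \<in> mon_idx r \<Longrightarrow> sigma_monomial r x \<in> monomial_span r"
| zero: "0 \<in> monomial_span r"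
| add: "P \<in> monomial_span r \<Longrightarrow> Q \<in> monomial_span r \<Longrightarrow> P + Q \<in> monomial_span r"
| smult: "P \<in> monomial_span r \<Longrightarrow> single 0 c * P \<in> monomial_span r"

definition idx_add :: "(nat \<Rightarrow> nat) \<times> int \<Rightarrow> (nat \<Rightarrow> nat) \<times> int \<Rightarrow> (nat \<Rightarrow> nat) \<times> int" where
  "idx_add x y = (\<lambda>s. fst x s + fst y s, snd x + snd y)"

lemma idx_add_mon_idx: "x \<in> mon_idx r \<Longrightarrow> y \<in> mon_idx r \<Longrightarrow> idx_add x y \<in> mon_idx r"
  by (auto simp: mon_idx_def idx_add_def)

lemma sigma_monomial_mult:
  "sigma_monomial r x * sigma_monomial r y = sigma_monomial r (idx_add x y)"
  unfolding sigma_monomial_def idx_add_def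
  by (simp add: power_add prod.distrib top_power_add[symmetric] ac_simps)

lemma sigma_monomial_mult_monomial_span:
  assumes "Q \<in> monomial_span r" "x \<in> mon_idx r"
  shows "sigma_monomial r x * Q \<in> monomial_span r"
  using assms
proof (induction Q rule: monomial_span.induct)
  case (monomial y)
  then have "idx_add x y \<in> mon_idx r"
    by (rule idx_add_mon_idx[rotated])
  then show ?case
    unfolding sigma_monomial_mult by (rule monomial_span.monomial)
next
  case zero
  then show ?case
    using monomial_span.zero by simp
next
  case (add P Q)
  then show ?case
    unfolding distrib_left by (blast intro: monomial_span.add)
next
  case (smult P c)
  then show ?case
    unfolding mult.left_commute[of "sigma_monomial r x"] by (blast intro: monomial_span.smult)
qed

lemma monomial_span_mult:
  "P \<in> monomial_span r \<Longrightarrow> Q \<in> monomial_span r \<Longrightarrow> P * Q \<in> monomial_span r"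
  by (induction P rule: monomial_span.induct)
    (auto simp: distrib_right mult.assoc sigma_monomial_mult_monomial_span
      intro: monomial_span.intros)

lemma one_in_monomial_span: "1 \<in> monomial_span r"
proof -
  have "sigma_monomial r (\<lambda>_. 0, 0) = 1"
    by (simp add: sigma_monomial_def)
  moreover have "(\<lambda>_. 0, 0) \<in> mon_idx r"
    by (simp add: mon_idx_def)
  ultimately show ?thesis by (metis monomial_span.monomial)
qed

interpretation monomial_span: laurent_subalgebra "monomial_span r"
  by unfold_locales (auto intro: monomial_span.intros one_in_monomial_span monomial_span_mult)

lemma top_power_in_monomial_span: "top_power r k \<in> monomial_span r"
proof -
  have "sigma_monomial r (\<lambda>_. 0, k) = top_power r k"
    by (simp add: sigma_monomial_def)
  moreover have "(\<lambda>_. 0, k) \<in> mon_idx r"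
    by (simp add: mon_idx_def)
  ultimately show ?thesis by (metis monomial_span.monomial)
qed

lemma esym_var_in_monomial_span: "esym var r j \<in> monomial_span r"
proof -
  consider "j = 0" | "1 \<le> j" "j < r" | "j = r" | "j > r"
    by linarith
  then show ?thesis
  proof cases
    case 2
    let ?x = "(\<lambda>s. if s = j then 1 else 0, 0) :: (nat \<Rightarrow> nat) \<times> int"
    have "(\<Prod>s\<in>{1..<r}. esym var r s ^ fst ?x s) = (\<Prod>s\<in>{1..<r}. if s = j then esym var r s else 1)"
      by (rule prod.cong) auto
    with 2 have "sigma_monomial r ?x = esym var r j"
      by (simp add: sigma_monomial_def prod.delta)
    moreover have "?x \<in> mon_idx r" using 2 by (auto simp: mon_idx_def)
    ultimately show ?thesis by (metis monomial_span.monomial)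
  qed (auto simp: esym_gt esym_var_top top_power_in_monomial_span
      intro: monomial_span.one_mem monomial_span.zero)
qed

lemma esym_var_inv_in_monomial_span: "esym var_inv r j \<in> monomial_span r"
proof (cases "j \<le> r")
  case True
  then show ?thesis
    by (simp add: esym_var_inv monomial_span_mult top_power_in_monomial_span
        esym_var_in_monomial_span)
qed (simp add: esym_gt monomial_span.zero)

lemma Zalg_agrees_with_monomial_span:
  assumes "A \<in> Zalg n r"
  shows "\<exists>P\<in>monomial_span r. \<forall>f\<in>Omega r. A f = eval_phi n P f"
  using assms
proof (induction rule: Zalg.induct)
  case (gen_p m)
  then obtain m' where "m = Suc m'" by (cases m) auto
  then show ?case
    using monomial_span.psum_mem_if_esym_mem[OF esym_var_in_monomial_span, of r m']
    by (auto simp flip: eval_phi_psum_var)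
next
  case (gen_q m)
  then obtain m' where "m = Suc m'" by (cases m) auto
  then show ?case
    using monomial_span.psum_mem_if_esym_mem[OF esym_var_inv_in_monomial_span, of r m']
    by (auto simp flip: eval_phi_psum_var_inv)
next
  case unit
  then show ?case
    by (intro bexI[of _ 1] monomial_span.one_mem) (simp add: eval_phi_one)
next
  case (add A B)
  then obtain P Q where "P \<in> monomial_span r" "Q \<in> monomial_span r"
    "\<forall>f\<in>Omega r. A f = eval_phi n P f" "\<forall>f\<in>Omega r. B f = eval_phi n Q f"
    by blast
  then show ?case
    by (intro bexI[of _ "P + Q"]) (auto simp: eval_phi_add op_add_def intro: monomial_span.add)
next
  case (smult A c)
  then obtain P where "P \<in> monomial_span r" "\<forall>f\<in>Omega r. A f = eval_phi n P f"
    by blast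
  then show ?case
    by (intro bexI[of _ "single 0 c * P"])
      (auto simp: eval_phi_smult op_smult_def intro: monomial_span.smult)
next
  case (comp A B)
  then obtain P Q where "P \<in> monomial_span r" "Q \<in> monomial_span r"
    "\<forall>f\<in>Omega r. A f = eval_phi n P f" "\<forall>f\<in>Omega r. B f = eval_phi n Q f"
    by blast
  then show ?case
    by (intro bexI[of _ "P * Q"])
      (auto simp: eval_phi_mult eval_phi_Omega intro: monomial_span_mult)
qed

lemma monomial_span_finite_combination:
  assumes "P \<in> monomial_span r"
  shows "\<exists>F c. finite F \<and> F \<subseteq> mon_idx r \<and> P = (\<Sum>x\<in>F. single 0 (c x) * sigma_monomial r x)"
  using assms
proof (induction rule: monomial_span.induct)
  case (monomial x)
  then show ?case by (intro exI[of _ "{x}"] exI[of _ "\<lambda>_. 1"]) simp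
next
  case zero
  then show ?case by (intro exI[of _ "{}"]) simp
next
  case (add P Q)
  then obtain F1 c1 F2 c2 where h: "finite F1" "F1 \<subseteq> mon_idx r"
    "P = (\<Sum>x\<in>F1. single 0 (c1 x) * sigma_monomial r x)"
    "finite F2" "F2 \<subseteq> mon_idx r" "Q = (\<Sum>x\<in>F2. single 0 (c2 x) * sigma_monomial r x)"
    by blast
  define d1 where "d1 x = (if x \<in> F1 then c1 x else 0)" for x
  define d2 where "d2 x = (if x \<in> F2 then c2 x else 0)" for x
  have "P = (\<Sum>x\<in>F1 \<union> F2. single 0 (d1 x) * sigma_monomial r x)"
    unfolding h(3) d1_def by (rule sum.mono_neutral_cong_left) (use h in auto)
  moreover have "Q = (\<Sum>x\<in>F1 \<union> F2. single 0 (d2 x) * sigma_monomial r x)"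
    unfolding h(6) d2_def by (rule sum.mono_neutral_cong_left) (use h in auto)
  ultimately show ?case
    by (intro exI[of _ "F1 \<union> F2"] exI[of _ "\<lambda>x. d1 x + d2 x"])
      (use h in \<open>auto simp: single_add distrib_right sum.distrib\<close>)
next
  case (smult P c)
  then obtain F c1 where h: "finite F" "F \<subseteq> mon_idx r"
    "P = (\<Sum>x\<in>F. single 0 (c1 x) * sigma_monomial r x)"
    by blast
  show ?case
    by (intro exI[of _ F] exI[of _ "\<lambda>x. c * c1 x"])
      (use h in \<open>auto simp: sum_distrib_left mult_single mult.assoc[symmetric]\<close>)
qed

lemma eval_phi_monomial_combination:
  "eval_phi n (\<Sum>x\<in>F. single 0 (c x) * sigma_monomial r x) f j
     = (\<Sum>x\<in>F. c x * sigma_mon n r x f j)"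
  by (simp add: eval_phi_sum eval_phi_smult eval_phi_sigma_monomial op_smult_def)

lemma Zalg_in_sigma_mon_span:
  assumes "A \<in> Zalg n r"
  shows "\<exists>F c. finite F \<and> F \<subseteq> mon_idx r \<and>
           (\<forall>f\<in>Omega r. \<forall>j. A f j = (\<Sum>x\<in>F. c x * sigma_mon n r x f j))"
proof -
  from Zalg_agrees_with_monomial_span[OF assms] obtain P
    where P: "P \<in> monomial_span r" "\<forall>f\<in>Omega r. A f = eval_phi n P f" ..
  obtain F c where F: "finite F" "F \<subseteq> mon_idx r"
    and P_eq: "P = (\<Sum>x\<in>F. single 0 (c x) * sigma_monomial r x)"
    using monomial_span_finite_combination[OF P(1)] by blast
  show ?thesis
    by (intro exI[of _ F] exI[of _ c])
      (simp add: F P(2) P_eq eval_phi_monomial_combination)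
qed

section \<open>Linear independence of the monomials\<close>

definition exponent_within :: "nat \<Rightarrow> exponent \<Rightarrow> bool" where
  "exponent_within r a \<longleftrightarrow> (\<forall>i. i = 0 \<or> i > r \<longrightarrow> lookup a i = 0)"

definition laurent_within :: "nat \<Rightarrow> laurent set" where
  "laurent_within r = {P. \<forall>a\<in>keys P. exponent_within r a}"

interpretation laurent_within: laurent_subalgebra "laurent_within r"
proof
  have within_add: "exponent_within r (a + b)"
    if "exponent_within r a" "exponent_within r b" for a b
    using that by (auto simp: exponent_within_def lookup_add)
  show "P * Q \<in> laurent_within r" if "P \<in> laurent_within r" "Q \<in> laurent_within r" for P Q
    using that keys_mult[of P Q] by (auto simp: laurent_within_def intro!: within_add)
  show "P + Q \<in> laurent_within r" if "P \<in> laurent_within r" "Q \<in> laurent_within r" for P Q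
    using that keys_add[of P Q] by (auto simp: laurent_within_def)
  show "single 0 c * P \<in> laurent_within r" if "P \<in> laurent_within r" for c P
    using that keys_mult[of "single 0 c" P]
    by (auto simp: laurent_within_def exponent_within_def split: if_splits)
qed (auto simp: laurent_within_def exponent_within_def keys_one)

lemma sigma_monomial_within: "sigma_monomial r x \<in> laurent_within r"
proof -
  have "var s \<in> laurent_within r" if "s \<in> {1..r}" for s
    using that by (auto simp: laurent_within_def var_def exponent_within_def lookup_single when_def)
  then have "esym var r s \<in> laurent_within r" for s
    unfolding esym_def by (intro laurent_within.sum_mem laurent_within.prod_mem) auto
  moreover have "top_power r k \<in> laurent_within r" for k
    by (auto simp: laurent_within_def top_power_def diag_exp_def exponent_within_def
        lookup_sum lookup_single when_def)
  ultimately show ?thesis unfolding sigma_monomial_def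
    by (intro laurent_within.mult_mem laurent_within.prod_mem laurent_within.power_mem)
qed

lemma shift_idx_zeros_inj:
  assumes "n \<ge> 1" "exponent_within r a" "exponent_within r b"
    and "shift_idx n a (replicate r 0) = shift_idx n b (replicate r 0)"
  shows "a = b"
proof (rule poly_mapping_eqI)
  fix i
  show "lookup a i = lookup b i"
  proof (cases "i = 0 \<or> i > r")
    case False
    then obtain i' where i': "i = Suc i'" "i' < r" by (cases i) auto
    have "shift_idx n a (replicate r 0) ! i' = shift_idx n b (replicate r 0) ! i'"
      using assms(4) by simp
    then show ?thesis using i' assms(1) by simp
  qed (use assms(2,3) in \<open>auto simp: exponent_within_def\<close>)
qed

text \<open>Tested against the basis vector at the index tuple n a0, a nonzero P isolates its
  coefficient at a0.\<close>
lemma eval_phi_eq_zero_imp_zero: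
  assumes "n \<ge> 1" "P \<in> laurent_within r" "\<forall>f\<in>Omega r. \<forall>j. eval_phi n P f j = 0"
  shows "P = 0"
proof (rule ccontr)
  assume "P \<noteq> 0"
  then obtain a0 where a0: "a0 \<in> keys P" by (metis all_not_in_conv keys_eq_empty)
  define zeros where "zeros = (replicate r 0 :: int list)"
  define f0 where "f0 = (\<lambda>l. if l = shift_idx n a0 zeros then (1::qv) else 0)"
  have "{l. f0 l \<noteq> 0} = {shift_idx n a0 zeros}"
    by (auto simp: f0_def)
  then have "f0 \<in> Omega r"
    by (auto simp: Omega_def f0_def zeros_def)
  then have "eval_phi n P f0 zeros = 0" using assms(3) by blast
  moreover have "eval_phi n P f0 zeros = (\<Sum>a\<in>keys P. if a = a0 then lookup P a else 0)"
    unfolding eval_phi_def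
  proof (rule sum.cong)
    fix a assume "a \<in> keys P"
    then have "shift_idx n a zeros = shift_idx n a0 zeros \<longleftrightarrow> a = a0"
      using shift_idx_zeros_inj[OF assms(1)] a0 assms(2) by (auto simp: zeros_def laurent_within_def)
    then show "lookup P a * f0 (shift_idx n a zeros) = (if a = a0 then lookup P a else 0)"
      by (auto simp: f0_def)
  qed simp
  ultimately show False using a0 by (simp add: in_keys_iff)
qed

text \<open>The order on exponents is the lexicographic order of Poly_Mapping, in which
  lower-indexed variables are more significant.\<close>
definition leading_term :: "laurent \<Rightarrow> exponent \<Rightarrow> qv \<Rightarrow> bool" where
  "leading_term P m c \<longleftrightarrow> lookup P m = c \<and> (\<forall>k. lookup P k \<noteq> 0 \<longrightarrow> k \<le> m)"

lemma leading_term_mult: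
  assumes "leading_term P a c" "leading_term Q b d"
  shows "leading_term (P * Q) (a + b) (c * d)"
proof -
  have aP: "a' \<le> a" if "a' \<in> keys P" for a'
    using assms(1) that by (auto simp: leading_term_def in_keys_iff)
  have bQ: "b' \<le> b" if "b' \<in> keys Q" for b'
    using assms(2) that by (auto simp: leading_term_def in_keys_iff)
  have sum_eq: "a' + b' = a + b \<longleftrightarrow> a' = a \<and> b' = b" if "a' \<in> keys P" "b' \<in> keys Q" for a' b'
  proof
    assume "a' + b' = a + b"
    moreover have "a' + b' < a + b" if "a' \<noteq> a \<or> b' \<noteq> b"
      using that aP[OF \<open>a' \<in> keys P\<close>] bQ[OF \<open>b' \<in> keys Q\<close>]
      by (metis add_less_le_mono add_le_less_mono order_le_less)
    ultimately show "a' = a \<and> b' = b" by auto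
  qed auto
  have "lookup (P * Q) (a + b)
      = (\<Sum>a'\<in>keys P. \<Sum>b'\<in>keys Q. if a' = a \<and> b' = b then lookup P a' * lookup Q b' else 0)"
    unfolding lookup_mult_expand by (intro sum.cong refl) (simp add: sum_eq)
  also have "\<dots> = (\<Sum>a'\<in>keys P. if a' = a
                    then (\<Sum>b'\<in>keys Q. if b' = b then lookup P a' * lookup Q b' else 0) else 0)"
    by (intro sum.cong) auto
  also have "\<dots> = lookup P a * lookup Q b"
    by (simp only: sum.delta finite_keys) (auto simp: in_keys_iff)
  finally have lead: "lookup (P * Q) (a + b) = c * d"
    using assms by (simp add: leading_term_def)
  have "k \<le> a + b" if "lookup (P * Q) k \<noteq> 0" for k
  proof -
    from that obtain a' where A: "a' \<in> keys P"
      "(\<Sum>b'\<in>keys Q. if a' + b' = k then lookup P a' * lookup Q b' else 0) \<noteq> 0"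
      unfolding lookup_mult_expand by (metis (no_types, lifting) sum.not_neutral_contains_not_neutral)
    obtain b' where "b' \<in> keys Q" "(if a' + b' = k then lookup P a' * lookup Q b' else 0) \<noteq> 0"
      using sum.not_neutral_contains_not_neutral[OF A(2)] by blast
    with A(1) show ?thesis using aP bQ by (auto intro: add_mono split: if_splits)
  qed
  with lead show ?thesis by (simp add: leading_term_def)
qed

lemma leading_term_one: "leading_term 1 0 1"
  by (auto simp: leading_term_def lookup_one when_def)

lemma leading_term_single: "leading_term (single a 1) a 1"
  by (auto simp: leading_term_def lookup_single when_def)

lemma leading_term_power: "leading_term P a c \<Longrightarrow> leading_term (P ^ m) (of_nat m * a) (c ^ m)"
proof (induction m)
  case (Suc m)
  then show ?case
    using leading_term_mult[OF Suc.prems Suc.IH[OF Suc.prems]] by (simp add: distrib_right)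
qed (simp add: leading_term_one)

lemma leading_term_prod:
  "(\<And>s. s \<in> S \<Longrightarrow> leading_term (g s) (a s) (c s))
    \<Longrightarrow> leading_term (prod g S) (\<Sum>s\<in>S. a s) (\<Prod>s\<in>S. c s)"
  by (induction S rule: infinite_finite_induct) (auto simp: leading_term_one intro: leading_term_mult)

lemma lookup_indicator_exp: "finite S \<Longrightarrow> lookup (indicator_exp S) i = (if i \<in> S then 1 else 0)"
  by (simp add: indicator_exp_def lookup_sum lookup_single when_def)

lemma indicator_exp_inj:
  assumes "finite S" "finite T" "indicator_exp S = indicator_exp T"
  shows "S = T"
proof (rule set_eqI)
  fix i
  show "i \<in> S \<longleftrightarrow> i \<in> T"
    using arg_cong[OF assms(3), of "\<lambda>a. lookup a i"] assms(1,2)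
    by (simp add: lookup_indicator_exp split: if_splits)
qed

lemma indicator_exp_le_initial_segment:
  assumes "S \<subseteq> {1..r}" "card S = k"
  shows "indicator_exp S \<le> indicator_exp {1..k}"
proof (cases "{1..k} \<subseteq> S")
  case True
  have "finite S" using assms finite_subset by blast
  then have "S = {1..k}" using True assms card_subset_eq[of S "{1..k}"] by auto
  then show ?thesis by simp
next
  case False
  have fin: "finite S" using assms finite_subset by blast
  define i where "i = (LEAST i. i \<in> {1..k} \<and> i \<notin> S)"
  have ex: "\<exists>i. i \<in> {1..k} \<and> i \<notin> S" using False by auto
  have i: "i \<in> {1..k}" "i \<notin> S" using LeastI_ex[OF ex] by (auto simp: i_def)
  have below: "i' \<in> S" if "i' \<in> {1..k}" "i' < i" for i'
    using not_less_Least[of i' "\<lambda>i. i \<in> {1..k} \<and> i \<notin> S"] that by (auto simp: i_def)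
  have "less_fun (lookup (indicator_exp S)) (lookup (indicator_exp {1..k}))"
    unfolding less_fun_def
  proof (intro exI[of _ i] conjI allI impI)
    show "lookup (indicator_exp S) i < lookup (indicator_exp {1..k}) i"
      using i fin by (simp add: lookup_indicator_exp)
    fix i' assume "i' < i"
    show "lookup (indicator_exp S) i' = lookup (indicator_exp {1..k}) i'"
    proof (cases "i' = 0")
      case True
      then show ?thesis using assms(1) fin by (auto simp: lookup_indicator_exp)
    next
      case False
      then have "i' \<in> {1..k}" using \<open>i' < i\<close> i by auto
      then show ?thesis using below \<open>i' < i\<close> fin by (simp add: lookup_indicator_exp)
    qed
  qed
  then show ?thesis by (simp add: less_eq_poly_mapping_def)
qed

lemma leading_term_esym_var:
  assumes "1 \<le> k" "k \<le> r"
  shows "leading_term (esym var r k) (indicator_exp {1..k}) 1"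
proof -
  let ?Sk = "{S. S \<subseteq> {1..r} \<and> card S = k}"
  have lookup_esym: "lookup (esym var r k) m = (\<Sum>S\<in>?Sk. if indicator_exp S = m then 1 else 0)" for m
    by (simp add: esym_def prod_var lookup_sum lookup_single when_def)
  have "lookup (esym var r k) (indicator_exp {1..k}) = (\<Sum>S\<in>?Sk. if S = {1..k} then 1 else 0)"
    unfolding lookup_esym
    by (rule sum.cong[OF refl]) (auto dest: indicator_exp_inj[rotated 2] intro: finite_subset)
  also have "\<dots> = 1" using assms by simp
  finally have "lookup (esym var r k) (indicator_exp {1..k}) = 1" .
  moreover have "m \<le> indicator_exp {1..k}" if "lookup (esym var r k) m \<noteq> 0" for m
  proof -
    from that obtain S where "S \<in> ?Sk" "indicator_exp S = m" unfolding lookup_esym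
      by (metis (mono_tags, lifting) sum.not_neutral_contains_not_neutral)
    then show ?thesis using indicator_exp_le_initial_segment by blast
  qed
  ultimately show ?thesis by (simp add: leading_term_def)
qed

definition lead_exp :: "nat \<Rightarrow> (nat \<Rightarrow> nat) \<times> int \<Rightarrow> exponent" where
  "lead_exp r x = (\<Sum>s\<in>{1..<r}. of_nat (fst x s) * indicator_exp {1..s}) + diag_exp r (snd x)"

lemma leading_term_sigma_monomial: "leading_term (sigma_monomial r x) (lead_exp r x) 1"
proof -
  have "leading_term (\<Prod>s\<in>{1..<r}. esym var r s ^ fst x s)
      (\<Sum>s\<in>{1..<r}. of_nat (fst x s) * indicator_exp {1..s}) (\<Prod>s\<in>{1..<r}. 1 ^ fst x s)"
    by (intro leading_term_prod leading_term_power leading_term_esym_var) auto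
  from leading_term_mult[OF this leading_term_single[of "diag_exp r (snd x)"]]
  show ?thesis by (simp add: sigma_monomial_def lead_exp_def top_power_def)
qed

lemma lookup_of_nat_mult: "lookup (of_nat m * (a::exponent)) i = int m * lookup a i"
  using lookup_smult[of "of_nat m" a i] by (simp only: single_of_nat)

lemma lookup_lead_exp:
  assumes "1 \<le> i" "i \<le> r"
  shows "lookup (lead_exp r x) i = (\<Sum>s\<in>{i..<r}. int (fst x s)) + snd x"
proof -
  have "(\<Sum>s\<in>{1..<r}. int (fst x s) * (if i \<le> s then 1 else 0)) = (\<Sum>s\<in>{i..<r}. int (fst x s))"
    by (rule sum.mono_neutral_cong_right) (use assms in auto)
  then show ?thesis
    using assms
    by (simp add: lead_exp_def lookup_add lookup_sum lookup_of_nat_mult lookup_indicator_exp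
        diag_exp_def lookup_single when_def)
qed

lemma lead_exp_inj:
  assumes "1 \<le> r" "x \<in> mon_idx r" "y \<in> mon_idx r" "lead_exp r x = lead_exp r y"
  shows "x = y"
proof -
  have "snd x = snd y"
    using lookup_lead_exp[OF assms(1) order_refl, of x] lookup_lead_exp[OF assms(1) order_refl, of y]
      assms(4) by simp
  moreover have "fst x i = fst y i" for i
  proof (cases "1 \<le> i \<and> i < r")
    case True
    then have "int (fst z i) = lookup (lead_exp r z) i - lookup (lead_exp r z) (Suc i)" for z
      by (simp add: lookup_lead_exp sum.atLeast_Suc_lessThan)
    then show ?thesis using assms(4) by (metis of_nat_eq_iff)
  next
    case False
    then have "i = 0 \<or> r \<le> i" by auto
    with assms(2,3) show ?thesis by (auto simp: mon_idx_def)
  qed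
  ultimately show ?thesis by (simp add: prod_eq_iff fun_eq_iff)
qed

text \<open>The leading exponents of the monomials are distinct, so the largest one among those
  with nonzero coefficient occurs in exactly one summand.\<close>
lemma sigma_monomials_linear_independent:
  assumes "1 \<le> r" "finite F" "F \<subseteq> mon_idx r"
    and "(\<Sum>x\<in>F. single 0 (c x) * sigma_monomial r x) = 0"
  shows "\<forall>x\<in>F. c x = 0"
proof (rule ccontr)
  assume "\<not> (\<forall>x\<in>F. c x = 0)"
  define F' where "F' = {x\<in>F. c x \<noteq> 0}"
  have F': "F' \<noteq> {}" "finite F'"
    using \<open>\<not> (\<forall>x\<in>F. c x = 0)\<close> assms(2) by (auto simp: F'_def)
  obtain x0 where x0: "x0 \<in> F'" and max: "\<And>x. x \<in> F' \<Longrightarrow> lead_exp r x \<le> lead_exp r x0"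
    using Max_in[of "lead_exp r ` F'"] Max_ge[of "lead_exp r ` F'"] F' by fastforce
  have "c x * lookup (sigma_monomial r x) (lead_exp r x0) = (if x = x0 then c x else 0)"
    if "x \<in> F" for x
  proof (cases "x = x0 \<or> c x = 0")
    case True
    then show ?thesis
      using leading_term_sigma_monomial[of r x0] by (auto simp: leading_term_def)
  next
    case False
    with that have "x \<in> F'" by (simp add: F'_def)
    have "lead_exp r x \<noteq> lead_exp r x0"
      using lead_exp_inj[OF assms(1), of x x0] False x0 \<open>x \<in> F'\<close> assms(3) by (auto simp: F'_def)
    with max[OF \<open>x \<in> F'\<close>] have "lead_exp r x < lead_exp r x0"
      by simp
    then have "lookup (sigma_monomial r x) (lead_exp r x0) = 0"
      using leading_term_sigma_monomial[of r x] by (auto simp: leading_term_def)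
    with False show ?thesis by simp
  qed
  then have "lookup (\<Sum>x\<in>F. single 0 (c x) * sigma_monomial r x) (lead_exp r x0) = c x0"
    using x0 assms(2) by (simp add: lookup_sum lookup_smult sum.delta' F'_def cong: sum.cong)
  with assms(4) x0 show False by (simp add: F'_def)
qed

lemma sigma_mon_linear_independent:
  assumes "1 \<le> n" "1 \<le> r" "finite F" "F \<subseteq> mon_idx r"
    and "\<forall>f\<in>Omega r. \<forall>j. (\<Sum>x\<in>F. c x * sigma_mon n r x f j) = 0"
  shows "\<forall>x\<in>F. c x = 0"
proof -
  let ?P = "\<Sum>x\<in>F. single 0 (c x) * sigma_monomial r x"
  have "?P \<in> laurent_within r"
    by (intro laurent_within.sum_mem laurent_within.smult_mem sigma_monomial_within)
  then have "?P = 0"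
    using eval_phi_eq_zero_imp_zero[OF assms(1)] assms(5)
    by (simp add: eval_phi_monomial_combination)
  then show ?thesis using sigma_monomials_linear_independent[OF assms(2-4)] by simp
qed

theorem proposition5p2p3:
  fixes n r :: nat
  assumes "n \<ge> 2" and "r \<ge> 1"
  shows "(\<forall>x\<in>mon_idx r. sigma_mon n r x \<in> Zalg n r)
    \<and> (\<forall>F c. finite F \<longrightarrow> F \<subseteq> mon_idx r \<longrightarrow>
          (\<forall>f\<in>Omega r. \<forall>j. (\<Sum>x\<in>F. c x * sigma_mon n r x f j) = 0) \<longrightarrow>
          (\<forall>x\<in>F. c x = (0::qv)))
    \<and> (\<forall>A\<in>Zalg n r. \<exists>F c. finite F \<and> F \<subseteq> mon_idx r \<and>
          (\<forall>f\<in>Omega r. \<forall>j. A f j = (\<Sum>x\<in>F. c x * sigma_mon n r x f j)))"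
  using sigma_mon_in_Zalg sigma_mon_linear_independent[of n r] Zalg_in_sigma_mon_span assms
  by auto

end
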